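(* Let $G$ be a finite connected undirected graph with $m$ edges, unknown to the agents. Two agents start at the same node of $G$ and both execute the navigation table $T_{\mathrm{explo}}$ (described in the context) in the asynchronous model. Then the two agents traverse all edges of $G$ twice and then stop at the same node after exactly $2m$ rounds.
   Context: Model. A passage (port) is an endpoint of an edge at one of its nodes; $u\xrightarrow{e}v$ denotes the passage of edge $e=(u,v)$ at $u$. Each passage carries one marker from a finite alphabet; initially every passage has the default marker $\emptyset$ (unmarked). The graph is unlabelled; an agent at a node sees only the markers of the passages at that node and remembers only the passage by which it arrived. A move of an agent at node $u$ consists of: (S1) reading the markers at $u$ and either stopping or choosing a passage $p_u$ at $u$; (S2) possibly changing the marker of $p_u$; (S3) traversing the corresponding edge; (S4) arriving at $v$ through passage $p_v$ and reading the markers at $v$; (S5) possibly changing the marker of $p_v$. In the asynchronous model, at each round an adversary chooses one of the two agents, which performs a whole move (S1)–(S5). Navigation tables. A navigation table is an ordered list of rows $(p_u, p_u', p_v, p_v')$. An agent at $u$ takes the first row (in order) such that $u$ has a passage with marker $p_u$ (rows with the same $p_u$ are distinguished only after arrival, by the condition in column $p_v$); it picks such a passage, replaces its marker by $p_u'$, traverses the edge, and on arriving at $v$ replaces the marker of the arrival passage by the $p_v'$ of the row whose $p_v$ condition holds. A dash means "any marker / unchanged". If no row applies, the agent stops. A node is "discovered" if it has been visited before. Table $T_{\mathrm{explo}}$ (rows in priority order, markers B, D, E, F): (1) $p_u=$B, $p_u'=$D, $p_v=$ -, $p_v'=$D; (2) $p_u=\emptyset$, $p_u'=$E, $p_v=$E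 (the arrival passage at $v$ is marked E), $p_v'=$D; (3) $p_u=\emptyset$, $p_u'=$E, $v$ already discovered, $p_v'=$B; (4) $p_u=\emptyset$, $p_u'=$E, $v$ undiscovered, $p_v'=$F; (5) $p_u=$F, $p_u'=$D, $p_v=$ -, $p_v'=$D; (6) $p_u=$E, $p_u'=$D, $p_v=$ -, $p_v'=$D. *)

theory Defs
  imports Main
begin

datatype marker = Unm | MB | MD | ME | MF

(* Simple undirected graph: symmetric irreflexive relation Adj on V.
   The passage u --e--> v of edge e = {u,v} at u is the ordered pair (u,v). *)

record 'v config =
  marks   :: "'v \<times> 'v \<Rightarrow> marker"
  pos     :: "bool \<Rightarrow> 'v"
  visited :: "'v set"
  stopped :: "bool \<Rightarrow> bool"

definition has_passage :: "('v \<times> 'v) set \<Rightarrow> ('v \<times> 'v \<Rightarrow> marker) \<Rightarrow> 'v \<Rightarrow> marker \<Rightarrow> bool" where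
  "has_passage Adj mk u x \<longleftrightarrow> (\<exists>v. (u, v) \<in> Adj \<and> mk (u, v) = x)"

(* The p_u column of the first applicable row of T_explo (rows in priority order:
   B (row 1), unmarked (rows 2-4), F (row 5), E (row 6)); None = no row applies. *)
definition active_marker :: "('v \<times> 'v) set \<Rightarrow> ('v \<times> 'v \<Rightarrow> marker) \<Rightarrow> 'v \<Rightarrow> marker option" where
  "active_marker Adj mk u =
     (if has_passage Adj mk u MB then Some MB
      else if has_passage Adj mk u Unm then Some Unm
      else if has_passage Adj mk u MF then Some MF
      else if has_passage Adj mk u ME then Some ME
      else None)"

(* marker update (row 2: arrival passage marked E; row 3: v discovered; row 4: otherwise;
   rows 1, 5, 6: both ends set to D) of a move from u to v through passage (u,v) according to T_explo;
   vis is the set of nodes discovered before the move *)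
definition apply_row :: "('v \<times> 'v \<Rightarrow> marker) \<Rightarrow> 'v set \<Rightarrow> 'v \<Rightarrow> 'v \<Rightarrow> ('v \<times> 'v \<Rightarrow> marker)" where
  "apply_row mk vis u v =
     (if mk (u, v) = Unm then
        (mk((u, v) := ME))((v, u) :=
           (if mk (v, u) = ME then MD
            else if v \<in> vis then MB
            else MF))
      else (mk((u, v) := MD))((v, u) := MD))"

(* one round of the asynchronous model: the adversary activates a non-stopped agent i.
   Label Some (u,v): agent traverses the edge from u to v; label None: agent stops. *)
inductive step :: "('v \<times> 'v) set \<Rightarrow> 'v config \<Rightarrow> ('v \<times> 'v) option \<Rightarrow> 'v config \<Rightarrow> bool"
  for Adj where
  move: "\<not> stopped c i \<Longrightarrow> (pos c i, v) \<in> Adj \<Longrightarrow>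
         active_marker Adj (marks c) (pos c i) = Some (marks c (pos c i, v)) \<Longrightarrow>
         step Adj c (Some (pos c i, v))
           (c\<lparr>marks := apply_row (marks c) (visited c) (pos c i) v,
              pos := (pos c)(i := v),
              visited := insert v (visited c)\<rparr>)"
| halt: "\<not> stopped c i \<Longrightarrow> active_marker Adj (marks c) (pos c i) = None \<Longrightarrow>
         step Adj c None (c\<lparr>stopped := (stopped c)(i := True)\<rparr>)"

inductive exec :: "('v \<times> 'v) set \<Rightarrow> 'v config \<Rightarrow> ('v \<times> 'v) option list \<Rightarrow> 'v config \<Rightarrow> bool"
  for Adj where
  exec_nil: "exec Adj c [] c"
| exec_cons: "step Adj c l c' \<Longrightarrow> exec Adj c' ls c'' \<Longrightarrow> exec Adj c (l # ls) c''"

definition init_config :: "'v \<Rightarrow> 'v config" where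
  "init_config s = \<lparr>marks = (\<lambda>_. Unm), pos = (\<lambda>_. s), visited = {s}, stopped = (\<lambda>_. False)\<rparr>"

definition traversals :: "('v \<times> 'v) option list \<Rightarrow> ('v \<times> 'v) list" where
  "traversals ls = [e. Some e \<leftarrow> ls]"

definition uedges :: "('v \<times> 'v) set \<Rightarrow> 'v set set" where
  "uedges Adj = {{u, v} | u v. (u, v) \<in> Adj}"

definition times_traversed :: "('v \<times> 'v) option list \<Rightarrow> 'v set \<Rightarrow> nat" where
  "times_traversed ls e = length (filter (\<lambda>(u, v). {u, v} = e) (traversals ls))"

end

(* The two agents jointly perform a depth-first search from a common root r.  Agent k
   is at the end of a trail r, P k along which it has advanced without returning: the
   forward passages of trail edges carry E, the backward ones F, except that the last
   edge may carry B when it led to an already discovered node.  Every other marked edge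
   is closed (D at both ends), and a discovered node with an unmarked passage is the root
   or lies on a trail (it has an F passage).  Each move preserves this; when an agent at
   the root has nothing but E and D left, it follows the first edge of the other trail,
   closing it, and the root advances.
   Each traversal raises the marks of the edge along Unm < E, F, B < D, so the marks
   record how often each edge has been traversed and the number of missing traversals
   plus running agents decreases in every round.  When both agents have stopped, all
   their passages are D, so both trails are empty, both agents are at the root, no
   discovered node has an unmarked passage, and by connectivity every edge is closed,
   i.e. has been traversed exactly twice. *)

theory Submission
  imports Defs
begin

section \<open>Trails\<close>

fun trail :: "'v \<Rightarrow> 'v list \<Rightarrow> ('v \<times> 'v) list" where
  "trail r [] = []"
| "trail r (x # xs) = (r, x) # trail x xs"

lemma trail_snoc: "trail r (xs @ [v]) = trail r xs @ [(last (r # xs), v)]"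
  by (induction xs arbitrary: r) auto

lemma trail_eq_Nil_iff [simp]: "trail r xs = [] \<longleftrightarrow> xs = []"
  by (cases xs) auto

lemma trail_butlast:
  "xs \<noteq> [] \<Longrightarrow> trail r xs = trail r (butlast xs) @ [(last (r # butlast xs), last xs)]"
  using trail_snoc[of r "butlast xs" "last xs"] by simp

lemma last_trail: "xs \<noteq> [] \<Longrightarrow> last (trail r xs) = (last (r # butlast xs), last xs)"
  by (subst trail_butlast) auto

lemma trail_edge_source:
  "(a, b) \<in> set (trail r xs) \<Longrightarrow> a = r \<or> (\<exists>c. (c, a) \<in> set (trail r xs))"
  by (induction xs arbitrary: r) force+

lemma in_set_butlast_or_last: "x \<in> set xs \<Longrightarrow> x \<in> set (butlast xs) \<or> x = last xs"
  by (cases xs rule: rev_cases) auto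

definition on_trails :: "'v \<Rightarrow> (bool \<Rightarrow> 'v list) \<Rightarrow> 'v \<times> 'v \<Rightarrow> bool" where
  "on_trails r P e \<longleftrightarrow> (\<exists>k. e \<in> set (trail r (P k)))"

lemma on_trailsI: "e \<in> set (trail r (P k)) \<Longrightarrow> on_trails r P e"
  by (auto simp: on_trails_def)

lemma trails_extend:
  fixes P :: "bool \<Rightarrow> 'v list"
  assumes trails: "distinct (trail r (P True) @ trail r (P False))"
    and fresh: "\<not> on_trails r P (u, v)" and u: "u = last (r # P i)"
  defines "P' \<equiv> P(i := P i @ [v])"
  shows "distinct (trail r (P' k))"
    and "k \<noteq> k' \<Longrightarrow> e \<in> set (trail r (P' k)) \<Longrightarrow> e \<notin> set (trail r (P' k'))"
    and "on_trails r P' e \<longleftrightarrow> on_trails r P e \<or> e = (u, v)"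
proof -
  have dist: "distinct (trail r (P k))" for k using trails by (cases k) simp_all
  have disj: "e \<notin> set (trail r (P k'))" if "k \<noteq> k'" "e \<in> set (trail r (P k))" for k k' e
    using trails that by (cases k; cases k') auto
  have not_in: "(u, v) \<notin> set (trail r (P k))" for k using fresh on_trailsI by metis
  have trail_i: "trail r (P' i) = trail r (P i) @ [(u, v)]"
    using u by (simp add: P'_def trail_snoc)
  have set_P': "set (trail r (P' k)) = set (trail r (P k)) \<union> (if k = i then {(u, v)} else {})" for k
    using trail_i by (cases "k = i") (simp_all add: P'_def)
  show "distinct (trail r (P' k))"
    using dist[of k] not_in[of k] trail_i by (cases "k = i") (simp_all add: P'_def)
  show "e \<notin> set (trail r (P' k'))" if kk: "k \<noteq> k'" and ek: "e \<in> set (trail r (P' k))"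
  proof -
    consider "e \<in> set (trail r (P k))" | "k = i" "e = (u, v)"
      using ek set_P'[of k] by (auto split: if_splits)
    then show ?thesis
    proof cases
      case 1
      then have "e \<noteq> (u, v)" using not_in by blast
      then show ?thesis using disj[OF kk 1] set_P'[of k'] by simp
    next
      case 2
      then have "k' \<noteq> i" using kk by blast
      then show ?thesis using 2 not_in set_P'[of k'] by simp
    qed
  qed
  show "on_trails r P' e \<longleftrightarrow> on_trails r P e \<or> e = (u, v)"
  proof
    assume "on_trails r P' e"
    then obtain k where "e \<in> set (trail r (P' k))" unfolding on_trails_def by blast
    then show "on_trails r P e \<or> e = (u, v)"
      unfolding set_P' by (auto intro: on_trailsI split: if_splits)
  next
    assume "on_trails r P e \<or> e = (u, v)"
    then show "on_trails r P' e"
    proof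
      assume "on_trails r P e"
      then obtain k where "e \<in> set (trail r (P k))" unfolding on_trails_def by blast
      then show ?thesis by (intro on_trailsI[of _ _ P' k]) (simp add: set_P')
    qed (intro on_trailsI[of _ _ P' i], simp add: trail_i)
  qed
qed

lemma trails_retract:
  fixes P :: "bool \<Rightarrow> 'v list"
  assumes trails: "distinct (trail r (P True) @ trail r (P False))"
    and ne: "P i \<noteq> []"
  defines "P' \<equiv> P(i := butlast (P i))"
  shows "distinct (trail r (P' k))"
    and "k \<noteq> k' \<Longrightarrow> e \<in> set (trail r (P' k)) \<Longrightarrow> e \<notin> set (trail r (P' k'))"
    and "on_trails r P' e \<longleftrightarrow> on_trails r P e \<and> e \<noteq> last (trail r (P i))"
    and "set (butlast (trail r (P' k))) \<subseteq> set (butlast (trail r (P k)))"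
proof -
  have dist: "distinct (trail r (P k))" for k using trails by (cases k) simp_all
  have disj: "e \<notin> set (trail r (P k'))" if "k \<noteq> k'" "e \<in> set (trail r (P k))" for k k' e
    using trails that by (cases k; cases k') auto
  define e0 where "e0 = last (trail r (P i))"
  have trail_i: "trail r (P i) = trail r (P' i) @ [e0]"
    using trail_butlast[OF ne, of r] last_trail[OF ne, of r] by (simp add: P'_def e0_def)
  have set_P': "set (trail r (P' k)) = set (trail r (P k)) - {e0}" for k
  proof (cases "k = i")
    case True
    have "distinct (trail r (P' i) @ [e0])" using dist[of i] trail_i by simp
    then show ?thesis using True trail_i by auto
  next
    case False
    have "e0 \<notin> set (trail r (P k))" using disj[OF False[symmetric]] trail_i by simp
    then show ?thesis using False by (auto simp: P'_def)
  qed
  show "distinct (trail r (P' k))"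
    using dist[of k] trail_i by (cases "k = i") (simp_all add: P'_def)
  show "k \<noteq> k' \<Longrightarrow> e \<in> set (trail r (P' k)) \<Longrightarrow> e \<notin> set (trail r (P' k'))"
    using disj set_P' by blast
  show "on_trails r P' e \<longleftrightarrow> on_trails r P e \<and> e \<noteq> last (trail r (P i))"
    unfolding on_trails_def set_P' e0_def by blast
  show "set (butlast (trail r (P' k))) \<subseteq> set (butlast (trail r (P k)))"
    using trail_i by (cases "k = i") (auto simp: P'_def dest: in_set_butlastD)
qed

lemma trails_advance_root:
  fixes P :: "bool \<Rightarrow> 'v list"
  assumes trails: "distinct (trail r (P True) @ trail r (P False))"
    and Pi: "P i = []" and Pj: "P (\<not> i) = v # ys"
  defines "P' \<equiv> P(\<not> i := ys)"
  shows "distinct (trail v (P' k))"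
    and "k \<noteq> k' \<Longrightarrow> e \<in> set (trail v (P' k)) \<Longrightarrow> e \<notin> set (trail v (P' k'))"
    and "on_trails r P e \<longleftrightarrow> e = (r, v) \<or> e \<in> set (trail v ys)"
    and "on_trails v P' e \<longleftrightarrow> on_trails r P e \<and> e \<noteq> (r, v)"
proof -
  have dist: "distinct (trail r (P k))" for k using trails by (cases k) simp_all
  have P'i: "P' i = []" and P'j: "P' (\<not> i) = ys" using Pi by (simp_all add: P'_def)
  have trail_P': "set (trail v (P' k)) = (if k = i then {} else set (trail v ys))" for k
    using P'i P'j by (cases k; cases i) simp_all
  have dist_j: "distinct ((r, v) # trail v ys)" using dist[of "\<not> i"] Pj by simp
  show "distinct (trail v (P' k))"
    using dist_j P'i P'j by (cases k; cases i) simp_all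
  show "k \<noteq> k' \<Longrightarrow> e \<in> set (trail v (P' k)) \<Longrightarrow> e \<notin> set (trail v (P' k'))"
    unfolding trail_P' by (simp split: if_splits)
  have trail_P: "set (trail r (P k)) = (if k = i then {} else insert (r, v) (set (trail v ys)))" for k
    using Pi Pj by (cases k; cases i) simp_all
  show on_old: "on_trails r P e \<longleftrightarrow> e = (r, v) \<or> e \<in> set (trail v ys)"
    unfolding on_trails_def trail_P by (cases i) auto
  have "on_trails v P' e \<longleftrightarrow> e \<in> set (trail v ys)"
    unfolding on_trails_def trail_P' by (cases i) auto
  moreover have "(r, v) \<notin> set (trail v ys)" using dist_j by simp
  ultimately show "on_trails v P' e \<longleftrightarrow> on_trails r P e \<and> e \<noteq> (r, v)"
    using on_old by blast
qed

section \<open>Moves and consistent markings\<close>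

definition moved :: "'v config \<Rightarrow> bool \<Rightarrow> 'v \<Rightarrow> 'v config" where
  "moved c i v = c\<lparr>marks := apply_row (marks c) (visited c) (pos c i) v,
                    pos := (pos c)(i := v), visited := insert v (visited c)\<rparr>"

lemma moved_simps [simp]:
  "marks (moved c i v) = apply_row (marks c) (visited c) (pos c i) v"
  "pos (moved c i v) = (pos c)(i := v)"
  "visited (moved c i v) = insert v (visited c)"
  "stopped (moved c i v) = stopped c"
  by (simp_all add: moved_def)

lemma step_cases [consumes 1, case_names move halt]:
  assumes "step Adj c l c'"
  obtains (move) i v where "\<not> stopped c i" "(pos c i, v) \<in> Adj"
      "active_marker Adj (marks c) (pos c i) = Some (marks c (pos c i, v))"
      "l = Some (pos c i, v)" "c' = moved c i v"
  | (halt) i where "\<not> stopped c i" "active_marker Adj (marks c) (pos c i) = None"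
      "l = None" "c' = c\<lparr>stopped := (stopped c)(i := True)\<rparr>"
  using assms by cases (auto simp: moved_def)

lemma active_marker_SomeE:
  assumes "active_marker Adj mk u = Some m"
  obtains "m = MB"
  | "m = Unm" "\<not> has_passage Adj mk u MB"
  | "m = MF" "\<not> has_passage Adj mk u MB" "\<not> has_passage Adj mk u Unm"
  | "m = ME" "\<not> has_passage Adj mk u MB" "\<not> has_passage Adj mk u Unm" "\<not> has_passage Adj mk u MF"
  using assms by (auto simp: active_marker_def split: if_splits)

lemma active_marker_ne_MD: "active_marker Adj mk u \<noteq> Some MD"
  by (auto simp: active_marker_def)

lemma active_marker_None_iff:
  "active_marker Adj mk u = None \<longleftrightarrow> (\<forall>y. (u, y) \<in> Adj \<longrightarrow> mk (u, y) = MD)"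
proof -
  have "x = MD" if "x \<noteq> MB" "x \<noteq> Unm" "x \<noteq> MF" "x \<noteq> ME" for x
    using that by (cases x) auto
  then show ?thesis by (auto simp: active_marker_def has_passage_def)
qed

lemma marks_moved_marked:
  assumes "marks c (pos c i, v) \<noteq> Unm"
  shows "marks (moved c i v) = (marks c)((pos c i, v) := MD, (v, pos c i) := MD)"
  using assms by (auto simp: apply_row_def)

locale simple_graph =
  fixes Adj :: "('v \<times> 'v) set"
  assumes sym_Adj: "sym Adj" and irrefl_Adj: "irrefl Adj"
begin

lemma adj_sym: "(u, v) \<in> Adj \<Longrightarrow> (v, u) \<in> Adj"
  using sym_Adj by (rule symD)

lemma adj_neq: "(u, v) \<in> Adj \<Longrightarrow> u \<noteq> v"
  using irrefl_Adj by (auto simp: irrefl_def)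

end

(* The number of traversals of an edge one of whose passages carries the marker. *)
fun mark_rank :: "marker \<Rightarrow> nat" where
  "mark_rank Unm = 0" | "mark_rank MB = 1" | "mark_rank ME = 1" | "mark_rank MF = 1" | "mark_rank MD = 2"

locale consistent_marking = simple_graph Adj for Adj :: "('v \<times> 'v) set" +
  fixes c :: "'v config"
  assumes Unm_sym: "(a, b) \<in> Adj \<Longrightarrow> marks c (a, b) = Unm \<Longrightarrow> marks c (b, a) = Unm"
    and MD_sym: "(a, b) \<in> Adj \<Longrightarrow> marks c (a, b) = MD \<Longrightarrow> marks c (b, a) = MD"
    and MF_unique: "(a, x) \<in> Adj \<Longrightarrow> (a, y) \<in> Adj \<Longrightarrow> marks c (a, x) = MF \<Longrightarrow> marks c (a, y) = MF \<Longrightarrow> x = y"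
    and marked_visited: "(a, b) \<in> Adj \<Longrightarrow> marks c (a, b) \<noteq> Unm \<Longrightarrow> a \<in> visited c \<and> b \<in> visited c"
    and pos_visited: "pos c k \<in> visited c"
    and stopped_all_MD: "stopped c k \<Longrightarrow> (pos c k, y) \<in> Adj \<Longrightarrow> marks c (pos c k, y) = MD"
begin

lemma marks_moved_Unm:
  assumes "(pos c i, v) \<in> Adj" and "marks c (pos c i, v) = Unm"
  shows "marks (moved c i v) = (marks c)((pos c i, v) := ME, (v, pos c i) := (if v \<in> visited c then MB else MF))"
  using assms Unm_sym[OF adj_sym[OF assms(1)]] Unm_sym[OF assms(1)] by (auto simp: apply_row_def)

lemma consistent_marking_moved:
  assumes ns: "\<not> stopped c i" and uv: "(pos c i, v) \<in> Adj" and nD: "marks c (pos c i, v) \<noteq> MD"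
  shows "consistent_marking Adj (moved c i v)"
proof -
  define u where "u = pos c i"
  define mk where "mk = marks c"
  define mk' where "mk' = marks (moved c i v)"
  have uv': "(u, v) \<in> Adj" and vu: "(v, u) \<in> Adj" and une: "u \<noteq> v"
    using uv adj_sym adj_neq by (auto simp: u_def)
  have nD': "mk (v, u) \<noteq> MD" using nD MD_sym vu by (auto simp: u_def mk_def)
  have same: "mk' p = mk p" if "p \<noteq> (u, v)" "p \<noteq> (v, u)" for p
    using that by (simp add: mk'_def mk_def u_def apply_row_def)
  have changed: "mk (u, v) = Unm \<and> mk' (u, v) = ME \<and> mk' (v, u) = (if v \<in> visited c then MB else MF)
      \<or> mk (u, v) \<noteq> Unm \<and> mk' (u, v) = MD \<and> mk' (v, u) = MD"
  proof (cases "mk (u, v) = Unm")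
    case True
    then show ?thesis using marks_moved_Unm[OF uv] une by (simp add: mk'_def mk_def u_def)
  next
    case False
    then show ?thesis using marks_moved_marked[of c i v] une by (simp add: mk'_def mk_def u_def)
  qed
  show ?thesis
  proof (unfold_locales, fold mk'_def)
    fix a b assume ab: "(a, b) \<in> Adj"
    show "mk' (b, a) = Unm" if "mk' (a, b) = Unm"
    proof -
      have "(a, b) \<noteq> (u, v)" "(a, b) \<noteq> (v, u)" using that changed by (auto split: if_splits)
      then show ?thesis using that same[of "(a, b)"] same[of "(b, a)"] Unm_sym[OF ab] by (auto simp: mk_def)
    qed
    show "mk' (b, a) = MD" if "mk' (a, b) = MD"
    proof (cases "(a, b) = (u, v) \<or> (a, b) = (v, u)")
      case True
      then show ?thesis using changed that by (auto split: if_splits)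
    next
      case False
      then show ?thesis using that same[of "(a, b)"] same[of "(b, a)"] MD_sym[OF ab] by (auto simp: mk_def)
    qed
  next
    have F_origin: "(a, b) = (v, u) \<and> v \<notin> visited c \<or> (a, b) \<noteq> (u, v) \<and> (a, b) \<noteq> (v, u) \<and> mk (a, b) = MF"
      if "mk' (a, b) = MF" for a b
    proof (cases "(a, b) = (u, v) \<or> (a, b) = (v, u)")
      case True
      then show ?thesis using changed that by (auto split: if_splits)
    next
      case False
      then show ?thesis using that same by simp
    qed
    fix a x y assume ax: "(a, x) \<in> Adj" and ay: "(a, y) \<in> Adj" and "mk' (a, x) = MF" "mk' (a, y) = MF"
    then consider "(a, x) = (v, u)" "(a, y) = (v, u)"
      | "(a, x) = (v, u)" "v \<notin> visited c" "mk (a, y) = MF"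
      | "(a, y) = (v, u)" "v \<notin> visited c" "mk (a, x) = MF"
      | "mk (a, x) = MF" "mk (a, y) = MF"
      using F_origin by metis
    then show "x = y"
    proof cases
      case 2
      then show ?thesis using marked_visited[OF ay] by (simp add: mk_def)
    next
      case 3
      then show ?thesis using marked_visited[OF ax] by (simp add: mk_def)
    next
      case 4
      then show ?thesis using MF_unique[OF ax ay] by (simp add: mk_def)
    qed simp
  next
    fix a b assume ab: "(a, b) \<in> Adj" and "mk' (a, b) \<noteq> Unm"
    have "u \<in> visited c" using pos_visited[of i] by (simp add: u_def)
    then show "a \<in> visited (moved c i v) \<and> b \<in> visited (moved c i v)"
    proof (cases "(a, b) = (u, v) \<or> (a, b) = (v, u)")
      case False
      then have "mk (a, b) \<noteq> Unm" using \<open>mk' (a, b) \<noteq> Unm\<close> same by simp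
      then show ?thesis using marked_visited[OF ab] by (simp add: mk_def)
    qed auto
  next
    fix k show "pos (moved c i v) k \<in> visited (moved c i v)"
      using pos_visited by simp
  next
    fix k y assume "stopped (moved c i v) k" and ky: "(pos (moved c i v) k, y) \<in> Adj"
    then have sk: "stopped c k" by simp
    with ns have ki: "k \<noteq> i" by blast
    have all_MD: "mk (pos c k, z) = MD" if "(pos c k, z) \<in> Adj" for z
      using that stopped_all_MD[OF sk] unfolding mk_def by blast
    have "pos c k \<noteq> u" using all_MD uv' nD by (auto simp: u_def mk_def)
    moreover have "pos c k \<noteq> v" using all_MD vu nD' by auto
    moreover have "(pos c k, y) \<in> Adj" using ky ki by simp
    ultimately show "mk' (pos (moved c i v) k, y) = MD" using ki same[of "(pos c k, y)"] all_MD by simp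
  qed
qed

lemma consistent_marking_halted:
  assumes "active_marker Adj (marks c) (pos c i) = None"
  shows "consistent_marking Adj (c\<lparr>stopped := (stopped c)(i := True)\<rparr>)"
  using assms consistent_marking_axioms
  by (auto simp: consistent_marking_def consistent_marking_axioms_def active_marker_None_iff)

lemma consistent_marking_step: "step Adj c l c' \<Longrightarrow> consistent_marking Adj c'"
  by (induction rule: step_cases) (auto intro: consistent_marking_moved consistent_marking_halted simp: active_marker_ne_MD)

lemma rank_sym: "(a, b) \<in> Adj \<Longrightarrow> mark_rank (marks c (b, a)) = mark_rank (marks c (a, b))"
  using Unm_sym[of a b] Unm_sym[of b a] MD_sym[of a b] MD_sym[of b a] adj_sym[of a b]
  by (cases "marks c (a, b)"; cases "marks c (b, a)") auto

lemma rank_moved: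
  assumes uv: "(pos c i, v) \<in> Adj" and "marks c (pos c i, v) \<noteq> MD"
  shows "mark_rank (marks (moved c i v) (a, b))
       = mark_rank (marks c (a, b)) + (if {a, b} = {pos c i, v} then 1 else 0)"
proof -
  define u where "u = pos c i"
  have "mark_rank (marks c (u, v)) = mark_rank (marks c (v, u))" "mark_rank (marks c (u, v)) \<le> 1"
    using rank_sym[OF uv] assms(2) by (auto simp: u_def) (cases "marks c (pos c i, v)"; simp)
  moreover have "{a, b} = {u, v} \<longleftrightarrow> (a, b) = (u, v) \<or> (a, b) = (v, u)"
    by (auto simp: doubleton_eq_iff)
  ultimately show ?thesis
    using marks_moved_Unm[OF uv] marks_moved_marked[of c i v] adj_neq[OF uv]
    by (cases "marks c (u, v)") (auto simp: u_def)
qed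

end

section \<open>Traversal counts and termination\<close>

lemma length_eq_sum_length_filter:
  assumes "finite B" and "g ` set xs \<subseteq> B"
  shows "length xs = (\<Sum>y\<in>B. length (filter (\<lambda>x. g x = y) xs))"
  using assms(2)
proof (induction xs)
  case (Cons x xs)
  have "(\<Sum>y\<in>B. length (filter (\<lambda>x. g x = y) (x # xs)))
      = (\<Sum>y\<in>B. (if g x = y then 1 else 0) + length (filter (\<lambda>x. g x = y) xs))"
    by (intro sum.cong) auto
  also have "\<dots> = 1 + (\<Sum>y\<in>B. length (filter (\<lambda>x. g x = y) xs))"
    using Cons.prems assms(1) by (simp add: sum.distrib)
  finally show ?case using Cons by simp
qed simp

lemma uedges_eq_image: "uedges Adj = (\<lambda>(u, v). {u, v}) ` Adj"
  unfolding uedges_def by force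

definition counts_agree :: "('v \<times> 'v) set \<Rightarrow> 'v config \<Rightarrow> ('v \<times> 'v) option list \<Rightarrow> bool" where
  "counts_agree Adj c L \<longleftrightarrow> set (traversals L) \<subseteq> Adj \<and>
     (\<forall>(a, b) \<in> Adj. times_traversed L {a, b} = mark_rank (marks c (a, b)))"

lemma times_traversed_snoc:
  "times_traversed (L @ [Some (u, v)]) e = times_traversed L e + (if {u, v} = e then 1 else 0)"
  "times_traversed (L @ [None]) e = times_traversed L e"
  unfolding times_traversed_def traversals_def by simp_all

lemma counts_agree_init: "counts_agree Adj (init_config s) []"
  by (simp add: counts_agree_def traversals_def times_traversed_def init_config_def)

lemma counts_agree_all_closed:
  assumes counts: "counts_agree Adj c L" and "finite Adj"
    and closed: "\<And>a b. (a, b) \<in> Adj \<Longrightarrow> marks c (a, b) = MD"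
  shows "\<forall>e\<in>uedges Adj. times_traversed L e = 2"
    and "length (traversals L) = 2 * card (uedges Adj)"
proof -
  have twice: "times_traversed L e = 2" if "e \<in> uedges Adj" for e
    using that counts closed unfolding uedges_def counts_agree_def by auto
  then show "\<forall>e\<in>uedges Adj. times_traversed L e = 2" by blast
  have "(\<lambda>(u, v). {u, v}) ` set (traversals L) \<subseteq> uedges Adj"
    using counts unfolding counts_agree_def uedges_eq_image by blast
  then have "length (traversals L) = (\<Sum>e\<in>uedges Adj. times_traversed L e)"
    using length_eq_sum_length_filter[of "uedges Adj"] \<open>finite Adj\<close>
    by (simp add: uedges_eq_image times_traversed_def case_prod_unfold)
  also have "\<dots> = 2 * card (uedges Adj)" using twice by simp
  finally show "length (traversals L) = 2 * card (uedges Adj)" .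
qed

lemma (in consistent_marking) counts_agree_step:
  assumes "step Adj c l c'" and "counts_agree Adj c L"
  shows "counts_agree Adj c' (L @ [l])"
  using assms
proof (induction rule: step_cases)
  case (move i v)
  have nD: "marks c (pos c i, v) \<noteq> MD" using move(3) active_marker_ne_MD by metis
  have "times_traversed (L @ [l]) {a, b} = mark_rank (marks c' (a, b))" if "(a, b) \<in> Adj" for a b
    using that move.prems rank_moved[OF move(2) nD, of a b]
    unfolding move(4,5) counts_agree_def times_traversed_snoc by (auto simp del: moved_simps)
  with move show ?case by (auto simp: counts_agree_def traversals_def)
next
  case (halt i)
  then show ?case by (simp add: counts_agree_def traversals_def times_traversed_snoc)
qed

definition potential :: "('v \<times> 'v) set \<Rightarrow> 'v config \<Rightarrow> nat" where
  "potential Adj c = (\<Sum>p\<in>Adj. 2 - mark_rank (marks c p)) + card {k. \<not> stopped c k}"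

lemma (in consistent_marking) potential_step:
  assumes "finite Adj" and "step Adj c l c'"
  shows "potential Adj c' < potential Adj c"
  using assms(2)
proof (induction rule: step_cases)
  case (move i v)
  have nD: "marks c (pos c i, v) \<noteq> MD" using move(3) active_marker_ne_MD by metis
  have rank': "mark_rank (marks c' (a, b)) = mark_rank (marks c (a, b)) + (if {a, b} = {pos c i, v} then 1 else 0)"
    for a b unfolding move(5) by (rule rank_moved[OF move(2) nD])
  have "(\<Sum>p\<in>Adj. 2 - mark_rank (marks c' p)) < (\<Sum>p\<in>Adj. 2 - mark_rank (marks c p))"
  proof (rule sum_strict_mono_ex1[OF assms(1)])
    show "\<forall>p\<in>Adj. 2 - mark_rank (marks c' p) \<le> 2 - mark_rank (marks c p)"
    proof
      fix p :: "'v \<times> 'v"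
      obtain a b where "p = (a, b)" by fastforce
      then show "2 - mark_rank (marks c' p) \<le> 2 - mark_rank (marks c p)"
        using rank'[of a b] by simp
    qed
    have "mark_rank (marks c (pos c i, v)) < 2" using nD by (cases "marks c (pos c i, v)") auto
    then have "2 - mark_rank (marks c' (pos c i, v)) < 2 - mark_rank (marks c (pos c i, v))"
      using rank'[of "pos c i" v] by simp
    then show "\<exists>p\<in>Adj. 2 - mark_rank (marks c' p) < 2 - mark_rank (marks c p)"
      using move(2) by blast
  qed
  then show ?case by (simp add: potential_def move(5))
next
  case (halt i)
  have "{k. \<not> stopped c' k} = {k. \<not> stopped c k} - {i}" using halt(4) by auto
  then have "card {k. \<not> stopped c' k} < card {k. \<not> stopped c k}"
    using halt(1) by (metis card_Diff1_less finite mem_Collect_eq)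
  then show ?case by (simp add: potential_def halt(4))
qed

lemma step_visited_mono: "step Adj c l c' \<Longrightarrow> visited c \<subseteq> visited c'"
  by (induction rule: step_cases) auto

lemma exec_invariant:
  assumes "exec Adj c ls c'" and "Q c L"
    and "\<And>c l c' L. step Adj c l c' \<Longrightarrow> Q c L \<Longrightarrow> Q c' (L @ [l])"
  shows "Q c' (L @ ls)"
  using assms(1,2)
proof (induction arbitrary: L rule: exec.induct)
  case (exec_cons c l c' ls c'')
  then show ?case using assms(3)[OF exec_cons.hyps(1) exec_cons.prems] exec_cons.IH[of "L @ [l]"] by simp
qed simp

section \<open>The trail invariant\<close>

(* The root r and the trails P are ghost state: they are not part of the configuration. *)
locale trail_invariant = consistent_marking Adj c for Adj :: "('v \<times> 'v) set" and c :: "'v config" +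
  fixes r :: 'v and P :: "bool \<Rightarrow> 'v list"
  assumes root_visited: "r \<in> visited c"
    and pos_eq_last: "pos c k = last (r # P k)"
    and distinct_trail: "distinct (trail r (P k))"
    and trails_disjoint: "k \<noteq> k' \<Longrightarrow> e \<in> set (trail r (P k)) \<Longrightarrow> e \<notin> set (trail r (P k'))"
    and on_trails_marks: "on_trails r P (a, b) \<Longrightarrow> (a, b) \<in> Adj \<and> marks c (a, b) = ME \<and> marks c (b, a) \<in> {MF, MB}"
    and ME_on_trails: "(a, b) \<in> Adj \<Longrightarrow> marks c (a, b) = ME \<Longrightarrow> on_trails r P (a, b)"
    and MF_MB_on_trails: "(a, b) \<in> Adj \<Longrightarrow> marks c (a, b) \<in> {MF, MB} \<Longrightarrow> on_trails r P (b, a)"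
    and inner_edges_MF: "(a, b) \<in> set (butlast (trail r (P k))) \<Longrightarrow> marks c (b, a) = MF"
    and root_no_MF: "(r, x) \<in> Adj \<Longrightarrow> marks c (r, x) \<noteq> MF"
    and Unm_at_root_or_MF: "x \<in> visited c \<Longrightarrow> (x, y) \<in> Adj \<Longrightarrow> marks c (x, y) = Unm \<Longrightarrow>
        x = r \<or> (\<exists>z. (x, z) \<in> Adj \<and> marks c (x, z) = MF)"
begin

lemma trails_distinct: "distinct (trail r (P True) @ trail r (P False))"
  using distinct_trail[of True] distinct_trail[of False] trails_disjoint[of True False] by auto

lemma on_trails_reverse:
  assumes "on_trails r P (a, b)"
  shows "(b, a) \<in> Adj" "marks c (b, a) \<in> {MF, MB}"
  using on_trails_marks[OF assms] adj_sym by auto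

lemma last_trail_edge:
  assumes "P k \<noteq> []"
  obtains z where "last (trail r (P k)) = (z, pos c k)" "(z, pos c k) \<in> set (trail r (P k))"
    "(pos c k, z) \<in> Adj" "marks c (pos c k, z) \<in> {MF, MB}"
proof -
  define z where "z = last (r # butlast (P k))"
  have last: "last (trail r (P k)) = (z, pos c k)"
    using last_trail[OF assms] pos_eq_last[of k] assms by (simp add: z_def)
  then have "(z, pos c k) \<in> set (trail r (P k))"
    using assms by (metis last_in_set trail_eq_Nil_iff)
  with last show thesis
    using that on_trails_reverse[OF on_trailsI] by blast
qed

lemma forward_move:
  assumes ns: "\<not> stopped c i" and uv: "(pos c i, v) \<in> Adj"
    and am: "active_marker Adj (marks c) (pos c i) = Some Unm"
    and mu: "marks c (pos c i, v) = Unm"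
  shows "trail_invariant Adj (moved c i v) r (P(i := P i @ [v]))"
proof -
  define u where "u = pos c i"
  define mk where "mk = marks c"
  define mk' where "mk' = marks (moved c i v)"
  define P' where "P' = P(i := P i @ [v])"
  have uv': "(u, v) \<in> Adj" and vu: "(v, u) \<in> Adj" and une: "u \<noteq> v"
    using uv adj_sym adj_neq by (auto simp: u_def)
  have muv: "mk (u, v) = Unm" and mvu: "mk (v, u) = Unm"
    using mu Unm_sym uv' by (auto simp: u_def mk_def)
  have mk'_eq: "mk' = mk((u, v) := ME, (v, u) := (if v \<in> visited c then MB else MF))"
    using marks_moved_Unm[OF uv mu] by (simp add: mk'_def mk_def u_def)
  have "\<not> has_passage Adj mk u MB"
    using am unfolding u_def mk_def by (rule active_marker_SomeE) simp_all
  then have no_MB: "(u, y) \<in> Adj \<Longrightarrow> mk (u, y) \<noteq> MB" for y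
    by (auto simp: has_passage_def)
  have not_on_uv: "\<not> on_trails r P (u, v)" and not_on_vu: "\<not> on_trails r P (v, u)"
    using on_trails_marks[of u v] on_trails_marks[of v u] muv mvu by (auto simp: mk_def)
  have u_last: "u = last (r # P i)" using pos_eq_last[of i] by (simp add: u_def)
  note P'_trails = trails_extend[where r = r and P = P and i = i, OF trails_distinct not_on_uv u_last, folded P'_def]
  have trail_i: "trail r (P' i) = trail r (P i) @ [(u, v)]"
    using u_last by (simp add: P'_def trail_snoc)
  have trail_k: "k \<noteq> i \<Longrightarrow> P' k = P k" for k by (simp add: P'_def)
  have on_trails': "on_trails r P' e \<longleftrightarrow> on_trails r P e \<or> e = (u, v)" for e
    by (rule P'_trails(3))
  have mk'_other: "p \<noteq> (u, v) \<Longrightarrow> p \<noteq> (v, u) \<Longrightarrow> mk' p = mk p" for p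
    by (simp add: mk'_eq)
  have mk'_uv: "mk' (u, v) = ME" and mk'_vu: "mk' (v, u) = (if v \<in> visited c then MB else MF)"
    using une by (simp_all add: mk'_eq)
  have old_unchanged: "(a, b) \<noteq> (u, v) \<and> (a, b) \<noteq> (v, u)" if "on_trails r P (a, b)" for a b
    using that not_on_uv not_on_vu by blast
  have "consistent_marking Adj (moved c i v)" using consistent_marking_moved[OF ns uv] mu by simp
  then show ?thesis
  proof (rule trail_invariant.intro, unfold_locales, fold mk'_def P'_def, unfold moved_simps)
    show "r \<in> insert v (visited c)" using root_visited by simp
  next
    fix k show "((pos c)(i := v)) k = last (r # P' k)"
      using pos_eq_last[of k] by (cases "k = i") (simp_all add: P'_def)
  next
    fix k show "distinct (trail r (P' k))" by (rule P'_trails(1))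
  next
    fix k k' e show "k \<noteq> k' \<Longrightarrow> e \<in> set (trail r (P' k)) \<Longrightarrow> e \<notin> set (trail r (P' k'))"
      by (rule P'_trails(2))
  next
    fix a b assume "on_trails r P' (a, b)"
    then consider "on_trails r P (a, b)" | "(a, b) = (u, v)" using on_trails' by blast
    then show "(a, b) \<in> Adj \<and> mk' (a, b) = ME \<and> mk' (b, a) \<in> {MF, MB}"
    proof cases
      case 1
      have "(b, a) \<noteq> (u, v)" "(b, a) \<noteq> (v, u)" using old_unchanged[OF 1] by auto
      then show ?thesis using on_trails_marks[OF 1] old_unchanged[OF 1] mk'_other[of "(a, b)"] mk'_other[of "(b, a)"]
        by (simp add: mk_def)
    next
      case 2
      then show ?thesis using uv' mk'_uv mk'_vu by simp
    qed
  next
    fix a b assume ab: "(a, b) \<in> Adj" and E: "mk' (a, b) = ME"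
    show "on_trails r P' (a, b)"
    proof (cases "(a, b) = (u, v)")
      case False
      moreover have "(a, b) \<noteq> (v, u)" using E mk'_vu by (auto split: if_splits)
      ultimately have "mk (a, b) = ME" using E mk'_other by simp
      then show ?thesis using ME_on_trails[OF ab] on_trails' by (simp add: mk_def)
    qed (simp add: on_trails')
  next
    fix a b assume ab: "(a, b) \<in> Adj" and FB: "mk' (a, b) \<in> {MF, MB}"
    show "on_trails r P' (b, a)"
    proof (cases "(a, b) = (v, u)")
      case False
      moreover have "(a, b) \<noteq> (u, v)" using FB mk'_uv by auto
      ultimately have "mk (a, b) \<in> {MF, MB}" using FB mk'_other by simp
      then show ?thesis using MF_MB_on_trails[OF ab] on_trails' by (simp add: mk_def)
    qed (simp add: on_trails')
  next
    fix a b k assume ab: "(a, b) \<in> set (butlast (trail r (P' k)))"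
    then have ab_old: "(a, b) \<in> set (trail r (P k))"
      using trail_i trail_k by (cases "k = i") (auto dest: in_set_butlastD)
    have "mk (b, a) = MF"
    proof (cases "(a, b) \<in> set (butlast (trail r (P k)))")
      case False
      have "k = i"
      proof (rule ccontr)
        assume "k \<noteq> i"
        then show False using False ab trail_k[of k] by simp
      qed
      with False ab_old have ne: "P i \<noteq> []" and "(a, b) = last (trail r (P i))"
        using in_set_butlast_or_last by fastforce+
      moreover obtain z where "last (trail r (P i)) = (z, u)" and uz: "(u, z) \<in> Adj"
        and "mk (u, z) \<in> {MF, MB}"
        using last_trail_edge[OF ne] unfolding u_def mk_def by metis
      ultimately show ?thesis using no_MB[OF uz] by auto
    qed (simp add: inner_edges_MF mk_def)
    moreover have "(b, a) \<noteq> (u, v)" "(b, a) \<noteq> (v, u)"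
      using old_unchanged[OF on_trailsI[of _ r P k, OF ab_old]] by auto
    ultimately show "mk' (b, a) = MF" using mk'_other by simp
  next
    fix x assume rx: "(r, x) \<in> Adj"
    consider "(r, x) = (u, v)" | "(r, x) = (v, u)" | "(r, x) \<noteq> (u, v)" "(r, x) \<noteq> (v, u)"
      by blast
    then show "mk' (r, x) \<noteq> MF"
    proof cases
      case 2
      then show ?thesis using root_visited mk'_vu by auto
    next
      case 3
      then show ?thesis using mk'_other root_no_MF[OF rx] by (simp add: mk_def)
    qed (simp add: mk'_uv)
  next
    fix x y assume x: "x \<in> insert v (visited c)" and xy: "(x, y) \<in> Adj" and U: "mk' (x, y) = Unm"
    have "(x, y) \<noteq> (u, v)" "(x, y) \<noteq> (v, u)" using U mk'_uv mk'_vu by (auto split: if_splits)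
    then have "mk (x, y) = Unm" using U mk'_other by simp
    show "x = r \<or> (\<exists>z. (x, z) \<in> Adj \<and> mk' (x, z) = MF)"
    proof (cases "x \<in> visited c")
      case True
      then consider "x = r" | z where "(x, z) \<in> Adj" "mk (x, z) = MF"
        using Unm_at_root_or_MF[OF _ xy] \<open>mk (x, y) = Unm\<close> by (auto simp: mk_def)
      then show ?thesis
      proof cases
        case 2
        then have "(x, z) \<noteq> (u, v)" "(x, z) \<noteq> (v, u)" using muv mvu by auto
        then show ?thesis using 2 mk'_other by auto
      qed simp
    next
      case False
      then show ?thesis using x vu mk'_vu by auto
    qed
  qed
qed

lemma backtrack_move:
  assumes ns: "\<not> stopped c i" and uv: "(pos c i, v) \<in> Adj"
    and am: "active_marker Adj (marks c) (pos c i) = Some (marks c (pos c i, v))"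
    and FB: "marks c (pos c i, v) \<in> {MF, MB}"
    and ne: "P i \<noteq> []" and last: "last (trail r (P i)) = (v, pos c i)"
  shows "trail_invariant Adj (moved c i v) r (P(i := butlast (P i)))"
proof -
  define u where "u = pos c i"
  define mk where "mk = marks c"
  define mk' where "mk' = marks (moved c i v)"
  define P' where "P' = P(i := butlast (P i))"
  have uv': "(u, v) \<in> Adj" using uv by (simp add: u_def)
  have muv: "mk (u, v) \<in> {MF, MB}" using FB by (simp add: u_def mk_def)
  have mk'_eq: "mk' = mk((u, v) := MD, (v, u) := MD)"
    using marks_moved_marked[of c i v] FB by (auto simp: mk'_def mk_def u_def)
  have mk'_other: "p \<noteq> (u, v) \<Longrightarrow> p \<noteq> (v, u) \<Longrightarrow> mk' p = mk p" for p
    by (simp add: mk'_eq)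
  have mk'_closed: "mk' (u, v) = MD" "mk' (v, u) = MD"
    by (simp_all add: mk'_eq)
  note P'_trails = trails_retract[where r = r and P = P and i = i, OF trails_distinct ne, folded P'_def]
  have v_last: "v = last (r # P' i)"
    using last_trail[OF ne, of r] last by (simp add: P'_def u_def)
  have "on_trails r P (v, u)"
    using last ne last_in_set[of "trail r (P i)"] by (intro on_trailsI[of _ r P i]) (simp add: u_def)
  then have mvu: "mk (v, u) = ME" using on_trails_marks by (simp add: mk_def)
  have not_on_uv: "\<not> on_trails r P (u, v)" using on_trails_marks[of u v] muv by (auto simp: mk_def)
  have on_trails': "on_trails r P' e \<longleftrightarrow> on_trails r P e \<and> e \<noteq> (v, u)" for e
    using P'_trails(3) last by (simp add: u_def)
  have old_unchanged: "(a, b) \<noteq> (u, v)" if "on_trails r P (a, b)" for a b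
    using that not_on_uv by blast
  have "consistent_marking Adj (moved c i v)" using consistent_marking_moved[OF ns uv] FB by auto
  then show ?thesis
  proof (rule trail_invariant.intro, unfold_locales, fold mk'_def P'_def, unfold moved_simps)
    show "r \<in> insert v (visited c)" using root_visited by simp
  next
    fix k show "((pos c)(i := v)) k = last (r # P' k)"
      using pos_eq_last[of k] v_last by (cases "k = i") (simp_all add: P'_def)
  next
    fix k show "distinct (trail r (P' k))" by (rule P'_trails(1))
  next
    fix k k' e show "k \<noteq> k' \<Longrightarrow> e \<in> set (trail r (P' k)) \<Longrightarrow> e \<notin> set (trail r (P' k'))"
      by (rule P'_trails(2))
  next
    fix a b assume "on_trails r P' (a, b)"
    then have old: "on_trails r P (a, b)" and "(a, b) \<noteq> (v, u)" using on_trails' by auto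
    moreover have "(a, b) \<noteq> (u, v)" using old_unchanged[OF old] .
    ultimately show "(a, b) \<in> Adj \<and> mk' (a, b) = ME \<and> mk' (b, a) \<in> {MF, MB}"
      using on_trails_marks[OF old] mk'_other[of "(a, b)"] mk'_other[of "(b, a)"] by (auto simp: mk_def)
  next
    fix a b assume ab: "(a, b) \<in> Adj" and E: "mk' (a, b) = ME"
    then have "(a, b) \<noteq> (u, v)" "(a, b) \<noteq> (v, u)" using mk'_closed by auto
    with E have "mk (a, b) = ME" using mk'_other by simp
    then show "on_trails r P' (a, b)"
      using ME_on_trails[OF ab] on_trails' \<open>(a, b) \<noteq> (v, u)\<close> by (simp add: mk_def)
  next
    fix a b assume ab: "(a, b) \<in> Adj" and FB': "mk' (a, b) \<in> {MF, MB}"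
    then have "(a, b) \<noteq> (u, v)" "(a, b) \<noteq> (v, u)" using mk'_closed by auto
    with FB' have "mk (a, b) \<in> {MF, MB}" using mk'_other by simp
    then show "on_trails r P' (b, a)"
      using MF_MB_on_trails[OF ab] on_trails' \<open>(a, b) \<noteq> (u, v)\<close> by (auto simp: mk_def)
  next
    fix a b k assume ab: "(a, b) \<in> set (butlast (trail r (P' k)))"
    then have "(a, b) \<in> set (butlast (trail r (P k)))" using P'_trails(4) by blast
    then have "mk (b, a) = MF" using inner_edges_MF by (simp add: mk_def)
    moreover have "on_trails r P' (a, b)" using ab by (blast intro: on_trailsI in_set_butlastD)
    then have "on_trails r P (a, b)" and "(a, b) \<noteq> (v, u)" using on_trails' by simp_all
    ultimately show "mk' (b, a) = MF" using old_unchanged mk'_other[of "(b, a)"] by auto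
  next
    fix x assume rx: "(r, x) \<in> Adj"
    show "mk' (r, x) \<noteq> MF"
    proof (cases "(r, x) = (u, v) \<or> (r, x) = (v, u)")
      case False
      then show ?thesis using root_no_MF[OF rx] mk'_other[of "(r, x)"] by (simp add: mk_def)
    qed (use mk'_closed in auto)
  next
    fix x y assume x: "x \<in> insert v (visited c)" and xy: "(x, y) \<in> Adj" and U: "mk' (x, y) = Unm"
    have "(x, y) \<noteq> (u, v)" "(x, y) \<noteq> (v, u)" using U using mk'_closed by auto
    then have U_old: "mk (x, y) = Unm" using U mk'_other by simp
    have "v \<in> visited c" using marked_visited[OF uv'] muv by (auto simp: mk_def)
    then consider "x = r" | z where "(x, z) \<in> Adj" "mk (x, z) = MF"
      using Unm_at_root_or_MF[OF _ xy] x U_old by (auto simp: mk_def)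
    then show "x = r \<or> (\<exists>z. (x, z) \<in> Adj \<and> mk' (x, z) = MF)"
    proof cases
      case (2 z)
      have "(x, z) \<noteq> (u, v)"
      proof
        assume "(x, z) = (u, v)"
        then have "has_passage Adj (marks c) (pos c i) Unm" and "marks c (pos c i, v) = MF"
          using xy U_old 2 by (auto simp: has_passage_def u_def mk_def)
        then show False using am by (auto elim: active_marker_SomeE)
      qed
      moreover have "(x, z) \<noteq> (v, u)" using 2 mvu by auto
      ultimately show ?thesis using 2 mk'_other by auto
    qed simp
  qed
qed

lemma root_edge_is_first:
  assumes no_back: "\<And>y. (r, y) \<in> Adj \<Longrightarrow> marks c (r, y) \<notin> {MF, MB}"
    and rv: "(r, v) \<in> set (trail r (P k))"
  shows "\<exists>ys. P k = v # ys"
proof -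
  obtain x ys where Pk: "P k = x # ys" using rv by (cases "P k") auto
  have "x = v"
  proof (rule ccontr)
    assume "x \<noteq> v"
    then have "(r, v) \<in> set (trail x ys)" using rv Pk by simp
    then consider "r = x" | d where "(d, r) \<in> set (trail x ys)" using trail_edge_source by metis
    then show False
    proof cases
      case 1
      have "on_trails r P (r, x)" using Pk by (intro on_trailsI[of _ r P k]) simp
      then show False using on_trails_marks 1 adj_neq by blast
    next
      case (2 d)
      then have "on_trails r P (d, r)" using Pk by (intro on_trailsI[of _ r P k]) simp
      then show False using on_trails_reverse no_back by blast
    qed
  qed
  with Pk show ?thesis by blast
qed

(* The agent is at the root with only E and D passages left; it closes the first edge
   of the other trail, and the root advances along that edge. *)
lemma root_move:
  assumes ns: "\<not> stopped c i" and uv: "(pos c i, v) \<in> Adj"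
    and am: "active_marker Adj (marks c) (pos c i) = Some ME"
    and E: "marks c (pos c i, v) = ME"
  shows "trail_invariant Adj (moved c i v) v (P(\<not> i := tl (P (\<not> i))))"
proof -
  define u where "u = pos c i"
  define mk where "mk = marks c"
  define mk' where "mk' = marks (moved c i v)"
  define j where "j = (\<not> i)"
  define P' where "P' = P(j := tl (P j))"
  have other: "k \<noteq> i \<Longrightarrow> k = j" for k by (auto simp: j_def)
  have uv': "(u, v) \<in> Adj" using uv by (simp add: u_def)
  have muv: "mk (u, v) = ME" using E by (simp add: u_def mk_def)
  have mk'_eq: "mk' = mk((u, v) := MD, (v, u) := MD)"
    using marks_moved_marked[of c i v] E by (auto simp: mk'_def mk_def u_def)
  have mk'_other: "p \<noteq> (u, v) \<Longrightarrow> p \<noteq> (v, u) \<Longrightarrow> mk' p = mk p" for p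
    by (simp add: mk'_eq)
  have mk'_closed: "mk' (u, v) = MD" "mk' (v, u) = MD"
    by (simp_all add: mk'_eq)
  have "\<not> has_passage Adj mk u MB \<and> \<not> has_passage Adj mk u Unm \<and> \<not> has_passage Adj mk u MF"
    using am unfolding u_def mk_def by (rule active_marker_SomeE) simp_all
  then have only_ME_MD: "(u, y) \<in> Adj \<Longrightarrow> mk (u, y) \<notin> {MB, Unm, MF}" for y
    by (auto simp: has_passage_def)
  have Pi: "P i = []"
  proof (rule ccontr)
    assume "P i \<noteq> []"
    then obtain z where "(u, z) \<in> Adj" "mk (u, z) \<in> {MF, MB}"
      using last_trail_edge unfolding u_def mk_def by metis
    then show False using only_ME_MD by auto
  qed
  then have ur: "u = r" using pos_eq_last[of i] by (simp add: u_def)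
  have no_back: "(r, y) \<in> Adj \<Longrightarrow> marks c (r, y) \<notin> {MF, MB}" for y
    using only_ME_MD ur by (auto simp: mk_def)
  have on_rv: "on_trails r P (r, v)" using ME_on_trails[OF uv'] muv ur by (simp add: mk_def)
  then obtain k where "(r, v) \<in> set (trail r (P k))" unfolding on_trails_def by blast
  moreover have "k = j" using calculation Pi other by (cases "k = i") auto
  ultimately obtain ys where Pj: "P j = v # ys" using root_edge_is_first[OF no_back] by blast
  then have P'_eq: "P' = P(j := ys)" by (simp add: P'_def)
  note P'_trails = trails_advance_root[where r = r and P = P, OF trails_distinct Pi Pj[unfolded j_def], folded j_def, folded P'_eq]
  have trail_j: "trail r (P j) = (r, v) # trail v ys" using Pj by simp
  have dist_j: "distinct ((r, v) # trail v ys)" using distinct_trail[of j] trail_j by simp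
  have on_trails': "on_trails v P' e \<longleftrightarrow> on_trails r P e \<and> e \<noteq> (r, v)" for e
    by (rule P'_trails(4))
  have mvr: "mk (v, r) \<in> {MF, MB}" using on_trails_marks[OF on_rv] by (simp add: mk_def)
  have not_on_vr: "\<not> on_trails r P (v, r)" using on_trails_marks[of v r] mvr by (auto simp: mk_def)
  have "v \<in> visited c" using marked_visited[OF uv'] muv by (simp add: mk_def)
  have "consistent_marking Adj (moved c i v)" using consistent_marking_moved[OF ns uv] E by simp
  then show ?thesis
  proof (rule trail_invariant.intro, unfold_locales, fold mk'_def j_def, fold P'_def, unfold moved_simps)
    show "v \<in> insert v (visited c)" by simp
  next
    fix k show "((pos c)(i := v)) k = last (v # P' k)"
      using pos_eq_last[of j] Pi Pj other by (cases "k = i") (auto simp: P'_eq)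
  next
    fix k show "distinct (trail v (P' k))" by (rule P'_trails(1))
  next
    fix k k' e show "k \<noteq> k' \<Longrightarrow> e \<in> set (trail v (P' k)) \<Longrightarrow> e \<notin> set (trail v (P' k'))"
      by (rule P'_trails(2))
  next
    fix a b assume "on_trails v P' (a, b)"
    then have old: "on_trails r P (a, b)" and "(a, b) \<noteq> (r, v)" using on_trails' by auto
    moreover have "(a, b) \<noteq> (v, r)" using old not_on_vr by blast
    ultimately show "(a, b) \<in> Adj \<and> mk' (a, b) = ME \<and> mk' (b, a) \<in> {MF, MB}"
      using on_trails_marks[OF old] mk'_other[of "(a, b)"] mk'_other[of "(b, a)"] ur
      by (auto simp: mk_def)
  next
    fix a b assume ab: "(a, b) \<in> Adj" and E': "mk' (a, b) = ME"
    then have "(a, b) \<noteq> (u, v)" "(a, b) \<noteq> (v, u)" using mk'_closed by auto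
    with E' have "mk (a, b) = ME" using mk'_other by simp
    then show "on_trails v P' (a, b)"
      using ME_on_trails[OF ab] on_trails' \<open>(a, b) \<noteq> (u, v)\<close> ur by (simp add: mk_def)
  next
    fix a b assume ab: "(a, b) \<in> Adj" and FB: "mk' (a, b) \<in> {MF, MB}"
    then have "(a, b) \<noteq> (u, v)" "(a, b) \<noteq> (v, u)" using mk'_closed by auto
    with FB have "mk (a, b) \<in> {MF, MB}" using mk'_other by simp
    then show "on_trails v P' (b, a)"
      using MF_MB_on_trails[OF ab] on_trails' \<open>(a, b) \<noteq> (v, u)\<close> ur by (auto simp: mk_def)
  next
    fix a b k assume ab: "(a, b) \<in> set (butlast (trail v (P' k)))"
    then have "(a, b) \<in> set (butlast (trail v ys))"
      using Pi other by (cases "k = i") (auto simp: P'_eq)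
    then have inner: "(a, b) \<in> set (butlast (trail r (P j)))" and ab_ys: "(a, b) \<in> set (trail v ys)"
      using trail_j by (auto simp: butlast.simps split: if_splits dest: in_set_butlastD)
    have "(a, b) \<noteq> (r, v)" using ab_ys dist_j by auto
    moreover have "(a, b) \<noteq> (v, r)"
      using not_on_vr on_trailsI[of "(a, b)" r P j] ab_ys trail_j by auto
    ultimately show "mk' (b, a) = MF"
      using inner_edges_MF[OF inner] mk'_other[of "(b, a)"] ur by (auto simp: mk_def)
  next
    fix y assume vy: "(v, y) \<in> Adj"
    show "mk' (v, y) \<noteq> MF"
    proof
      assume F: "mk' (v, y) = MF"
      then have yr: "y \<noteq> r" using mk'_closed ur by auto
      then have mvy: "mk (v, y) = MF" using F mk'_other ur by auto
      then have "on_trails r P (y, v)" using MF_MB_on_trails[OF vy] by (simp add: mk_def)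
      then have "(y, v) \<in> set (trail v ys)" using P'_trails(3) yr by blast
      then have "(r, v) \<in> set (butlast (trail r (P j)))" using trail_j by (cases "trail v ys") auto
      then have "mk (v, r) = MF" using inner_edges_MF by (simp add: mk_def)
      then show False using MF_unique[OF vy adj_sym] mvy yr uv' ur by (simp add: mk_def)
    qed
  next
    fix x y assume x: "x \<in> insert v (visited c)" and xy: "(x, y) \<in> Adj" and U: "mk' (x, y) = Unm"
    have "(x, y) \<noteq> (u, v)" "(x, y) \<noteq> (v, u)" using U mk'_closed by auto
    then have U_old: "mk (x, y) = Unm" using U mk'_other by simp
    then have "x \<noteq> r" using only_ME_MD xy ur by auto
    then obtain z where xz: "(x, z) \<in> Adj" "mk (x, z) = MF"
      using Unm_at_root_or_MF[OF _ xy] x U_old \<open>v \<in> visited c\<close> by (auto simp: mk_def)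
    show "x = v \<or> (\<exists>z. (x, z) \<in> Adj \<and> mk' (x, z) = MF)"
    proof (cases "(x, z) = (v, u)")
      case False
      moreover have "(x, z) \<noteq> (u, v)" using xz muv by auto
      ultimately show ?thesis using xz mk'_other by auto
    qed simp
  qed
qed

lemma swap_agents:
  assumes "pos c True = pos c False"
  shows "trail_invariant Adj c r (\<lambda>k. P (\<not> k))"
proof -
  have pos_swap: "pos c k = pos c (\<not> k)" for k using assms by (cases k) simp_all
  have on_swap: "on_trails r (\<lambda>k. P (\<not> k)) e \<longleftrightarrow> on_trails r P e" for e
    by (auto simp: on_trails_def ex_bool_eq)
  show ?thesis
  proof (rule trail_invariant.intro[OF consistent_marking_axioms], unfold_locales, unfold on_swap)
    show "r \<in> visited c" by (rule root_visited)
  next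
    fix k show "pos c k = last (r # P (\<not> k))" using pos_eq_last[of "\<not> k"] pos_swap[of k] by simp
  next
    fix k show "distinct (trail r (P (\<not> k)))" by (rule distinct_trail)
  next
    fix k k' e assume "k \<noteq> k'" "e \<in> set (trail r (P (\<not> k)))"
    then show "e \<notin> set (trail r (P (\<not> k')))" using trails_disjoint[of "\<not> k" "\<not> k'"] by simp
  next
    fix a b show "on_trails r P (a, b) \<Longrightarrow> (a, b) \<in> Adj \<and> marks c (a, b) = ME \<and> marks c (b, a) \<in> {MF, MB}"
      by (rule on_trails_marks)
  next
    fix a b show "(a, b) \<in> Adj \<Longrightarrow> marks c (a, b) = ME \<Longrightarrow> on_trails r P (a, b)"
      by (rule ME_on_trails)
  next
    fix a b show "(a, b) \<in> Adj \<Longrightarrow> marks c (a, b) \<in> {MF, MB} \<Longrightarrow> on_trails r P (b, a)"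
      by (rule MF_MB_on_trails)
  next
    fix a b k show "(a, b) \<in> set (butlast (trail r (P (\<not> k)))) \<Longrightarrow> marks c (b, a) = MF"
      by (rule inner_edges_MF)
  qed (fact root_no_MF Unm_at_root_or_MF)+
qed

lemma halt_preserves_invariant:
  assumes "active_marker Adj (marks c) (pos c i) = None"
  shows "trail_invariant Adj (c\<lparr>stopped := (stopped c)(i := True)\<rparr>) r P"
proof -
  let ?c' = "c\<lparr>stopped := (stopped c)(i := True)\<rparr>"
  have same: "marks ?c' = marks c" "pos ?c' = pos c" "visited ?c' = visited c" by simp_all
  show ?thesis
  proof (intro trail_invariant.intro[OF consistent_marking_halted[OF assms]], unfold_locales, unfold same)
  qed (fact root_visited pos_eq_last distinct_trail trails_disjoint on_trails_marks ME_on_trails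
      MF_MB_on_trails inner_edges_MF root_no_MF Unm_at_root_or_MF)+
qed

lemma MB_passage_reverses_last_edge:
  assumes uv: "(u, v) \<in> Adj" and B: "marks c (u, v) = MB"
  obtains j where "P j \<noteq> []" "last (trail r (P j)) = (v, u)" "pos c j = u"
proof -
  obtain j where vu: "(v, u) \<in> set (trail r (P j))"
    using MF_MB_on_trails[OF uv] B unfolding on_trails_def by auto
  have "(v, u) \<notin> set (butlast (trail r (P j)))" using inner_edges_MF B by force
  then have last: "last (trail r (P j)) = (v, u)" using vu in_set_butlast_or_last by metis
  have ne: "P j \<noteq> []" using vu by auto
  then have "pos c j = u" using last_trail[OF ne, of r] last pos_eq_last[of j] by simp
  with ne last show thesis by (rule that)
qed

lemma MF_passage_reverses_last_edge:
  assumes uv: "(pos c i, v) \<in> Adj" and F: "marks c (pos c i, v) = MF"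
    and no_MB: "\<not> has_passage Adj (marks c) (pos c i) MB"
  shows "P i \<noteq> [] \<and> last (trail r (P i)) = (v, pos c i)"
proof -
  have ne: "P i \<noteq> []"
  proof
    assume "P i = []"
    then have "pos c i = r" using pos_eq_last[of i] by simp
    then show False using root_no_MF uv F by simp
  qed
  then obtain z where last: "last (trail r (P i)) = (z, pos c i)"
    and "(pos c i, z) \<in> Adj" "marks c (pos c i, z) \<in> {MF, MB}"
    by (rule last_trail_edge)
  then have "marks c (pos c i, z) = MF" using no_MB by (auto simp: has_passage_def)
  then have "z = v" using MF_unique \<open>(pos c i, z) \<in> Adj\<close> uv F by blast
  with ne last show ?thesis by simp
qed

lemma trail_invariant_step:
  assumes "step Adj c l c'"
  shows "\<exists>r' P'. trail_invariant Adj c' r' P'"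
  using assms
proof (induction rule: step_cases)
  case (move i v)
  note ns = move(1) and uv = move(2) and am = move(3)
  from am show ?case
  proof (rule active_marker_SomeE)
    assume B: "marks c (pos c i, v) = MB"
    obtain j where ne: "P j \<noteq> []" and last: "last (trail r (P j)) = (v, pos c i)"
      and pj: "pos c j = pos c i"
      using MB_passage_reverses_last_edge[OF uv B] by metis
    show ?case
    proof (cases "j = i")
      case True
      then show ?thesis using backtrack_move[OF ns uv am] B ne last move(5) by auto
    next
      case False
      \<comment> \<open>agent i stands at the end of the other trail: exchange the two trails\<close>
      then have "pos c True = pos c False" using pj by (cases i) auto
      then interpret swapped: trail_invariant Adj c r "\<lambda>k. P (\<not> k)" by (rule swap_agents)
      have "P (\<not> i) = P j" using False by (cases i) auto
      then show ?thesis
        using swapped.backtrack_move[OF ns uv am] B ne last move(5) by auto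
    qed
  next
    assume "marks c (pos c i, v) = Unm"
    then show ?case using forward_move[OF ns uv] am move(5) by auto
  next
    assume "marks c (pos c i, v) = MF" "\<not> has_passage Adj (marks c) (pos c i) MB"
    then show ?case using backtrack_move[OF ns uv am] MF_passage_reverses_last_edge[OF uv] move(5) by auto
  next
    assume "marks c (pos c i, v) = ME"
    then show ?case using root_move[OF ns uv] am move(5) by auto
  qed
next
  case (halt i)
  then show ?case using halt_preserves_invariant by blast
qed

lemma all_stopped_trails_empty:
  assumes "\<And>k. stopped c k"
  shows "P k = []"
proof (rule ccontr)
  assume "P k \<noteq> []"
  then obtain z where "(pos c k, z) \<in> Adj" "marks c (pos c k, z) \<in> {MF, MB}"
    by (rule last_trail_edge)
  then show False using stopped_all_MD assms by fastforce
qed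

lemma all_stopped_closed:
  assumes stopped: "\<And>k. stopped c k"
    and ab: "(a, b) \<in> Adj" and a: "a \<in> visited c"
  shows "marks c (a, b) = MD"
proof -
  have all_MD: "(pos c k, y) \<in> Adj \<Longrightarrow> marks c (pos c k, y) = MD" for k y
    using stopped_all_MD stopped by blast
  have "P k = []" for k using all_stopped_trails_empty stopped by blast
  then have at_root: "pos c k = r" and no_trails: "\<not> on_trails r P e" for k e
    using pos_eq_last by (simp_all add: on_trails_def)
  have "marks c (a, b) \<noteq> Unm"
  proof
    assume "marks c (a, b) = Unm"
    then consider "a = r" | z where "(a, z) \<in> Adj" "marks c (a, z) = MF"
      using Unm_at_root_or_MF[OF a ab] by blast
    then show False
    proof cases
      case 1
      then show False using all_MD[of True b] at_root ab \<open>marks c (a, b) = Unm\<close> by simp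
    next
      case 2
      then show False using MF_MB_on_trails no_trails by blast
    qed
  qed
  moreover have "marks c (a, b) \<notin> {ME, MF, MB}"
    using ME_on_trails[OF ab] MF_MB_on_trails[OF ab] no_trails by blast
  ultimately show ?thesis by (cases "marks c (a, b)") auto
qed

lemma all_stopped_reachable_closed:
  assumes stopped: "\<And>k. stopped c k" and s: "s \<in> visited c"
    and reach: "(s, a) \<in> Adj\<^sup>*" and ab: "(a, b) \<in> Adj"
  shows "marks c (a, b) = MD"
proof -
  from reach have "a \<in> visited c"
  proof (induction rule: rtrancl_induct)
    case (step x y)
    then have "marks c (x, y) = MD" using all_stopped_closed[OF stopped] by blast
    then show ?case using marked_visited[OF step(2)] by simp
  qed (rule s)
  then show ?thesis using all_stopped_closed[OF stopped ab] by blast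
qed

end

lemma (in simple_graph) trail_invariant_init: "trail_invariant Adj (init_config s) s (\<lambda>_. [])"
  by unfold_locales (auto simp: init_config_def on_trails_def)

lemma (in simple_graph) no_infinite_execution:
  assumes fin: "finite Adj"
  shows "\<not> (\<exists>f. f 0 = init_config s \<and> (\<forall>n. \<exists>l. step Adj (f n) l (f (Suc n))))"
proof
  assume "\<exists>f. f 0 = init_config s \<and> (\<forall>n. \<exists>l. step Adj (f n) l (f (Suc n)))"
  then obtain f where f0: "f 0 = init_config s" and run: "\<And>n. \<exists>l. step Adj (f n) l (f (Suc n))"
    by blast
  have marking: "consistent_marking Adj (f n)" for n
  proof (induction n)
    case 0
    show ?case using trail_invariant.axioms(1)[OF trail_invariant_init] f0 by simp
  next
    case (Suc n)
    obtain l where "step Adj (f n) l (f (Suc n))" using run by blast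
    then show ?case by (rule consistent_marking.consistent_marking_step[OF Suc.IH])
  qed
  have "(potential Adj (f (Suc n)), potential Adj (f n)) \<in> less_than" for n
  proof -
    obtain l where "step Adj (f n) l (f (Suc n))" using run by blast
    then show ?thesis using consistent_marking.potential_step[OF marking fin] by simp
  qed
  then have "\<exists>g. \<forall>n. (g (Suc n), g n) \<in> less_than"
    by (intro exI[of _ "\<lambda>n. potential Adj (f n)"]) blast
  then show False using wf_less_than unfolding wf_iff_no_infinite_down_chain by blast
qed

lemma (in simple_graph) terminal_execution:
  assumes fin: "finite Adj" and run: "exec Adj (init_config s) ls c" and stopped: "\<forall>i. stopped c i"
    and reachable: "\<And>a b. (a, b) \<in> Adj \<Longrightarrow> (s, a) \<in> Adj\<^sup>*"
  shows "length (traversals ls) = 2 * card (uedges Adj)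
      \<and> (\<forall>e\<in>uedges Adj. times_traversed ls e = 2) \<and> pos c True = pos c False"
proof -
  have init: "trail_invariant Adj (init_config s) s (\<lambda>_. [])" by (rule trail_invariant_init)
  have "\<exists>r P. trail_invariant Adj c r P"
  proof (rule exec_invariant[where Q = "\<lambda>c _. \<exists>r P. trail_invariant Adj c r P", OF run])
    show "\<exists>r P. trail_invariant Adj (init_config s) r P" using init by blast
  next
    fix c l c' assume step: "step Adj c l c'" and "\<exists>r P. trail_invariant Adj c r P"
    then obtain r P where "trail_invariant Adj c r P" by blast
    then show "\<exists>r P. trail_invariant Adj c' r P" by (rule trail_invariant.trail_invariant_step[OF _ step])
  qed
  then obtain r P where inv: "trail_invariant Adj c r P" by blast
  have "consistent_marking Adj c \<and> counts_agree Adj c ([] @ ls)"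
  proof (rule exec_invariant[where Q = "\<lambda>c L. consistent_marking Adj c \<and> counts_agree Adj c L", OF run])
    show "consistent_marking Adj (init_config s) \<and> counts_agree Adj (init_config s) []"
      using trail_invariant.axioms(1)[OF init] counts_agree_init[of Adj s] by (rule conjI)
  next
    fix c l c' L assume "step Adj c l c'" "consistent_marking Adj c \<and> counts_agree Adj c L"
    then show "consistent_marking Adj c' \<and> counts_agree Adj c' (L @ [l])"
      using consistent_marking.consistent_marking_step consistent_marking.counts_agree_step by blast
  qed
  then have counts: "counts_agree Adj c ls" by simp
  have "s \<in> visited c"
  proof (rule exec_invariant[where Q = "\<lambda>c _. s \<in> visited c", OF run])
    show "s \<in> visited (init_config s)" by (simp add: init_config_def)
  qed (use step_visited_mono in blast)
  then have "marks c (a, b) = MD" if "(a, b) \<in> Adj" for a b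
    using trail_invariant.all_stopped_reachable_closed[OF inv] stopped reachable that by blast
  then show ?thesis
    using counts_agree_all_closed[OF counts fin] trail_invariant.all_stopped_trails_empty[OF inv]
      trail_invariant.pos_eq_last[OF inv] stopped by simp
qed

theorem theorem4:
  fixes V :: "'v set" and Adj :: "('v \<times> 'v) set" and s :: 'v
  assumes "finite V"
    and "Adj \<subseteq> V \<times> V"
    and "sym Adj"
    and "irrefl Adj"
    and "\<forall>x\<in>V. \<forall>y\<in>V. (x, y) \<in> Adj\<^sup>*"
    and "s \<in> V"
  shows "\<not> (\<exists>f. f 0 = init_config s \<and> (\<forall>n. \<exists>l. step Adj (f n) l (f (Suc n))))
       \<and> (\<forall>ls c. exec Adj (init_config s) ls c \<and> (\<forall>i. stopped c i) \<longrightarrow>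
              length (traversals ls) = 2 * card (uedges Adj)
            \<and> (\<forall>e\<in>uedges Adj. times_traversed ls e = 2)
            \<and> pos c True = pos c False)"
proof
  interpret simple_graph Adj using assms(3,4) by unfold_locales
  have fin: "finite Adj" using assms(1,2) finite_subset by blast
  show "\<not> (\<exists>f. f 0 = init_config s \<and> (\<forall>n. \<exists>l. step Adj (f n) l (f (Suc n))))"
    using no_infinite_execution[OF fin] .
  have "(s, a) \<in> Adj\<^sup>*" if "(a, b) \<in> Adj" for a b using assms(2,5,6) that by blast
  then show "\<forall>ls c. exec Adj (init_config s) ls c \<and> (\<forall>i. stopped c i) \<longrightarrow>
      length (traversals ls) = 2 * card (uedges Adj)
      \<and> (\<forall>e\<in>uedges Adj. times_traversed ls e = 2) \<and> pos c True = pos c False"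
    using terminal_execution[OF fin] by blast
qed

end
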